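(* Let $R$ be a ring such that $\big[[R,R],[R,R]^2\big]=\{0\}$. Then the commutator ideal of $R$ (the two-sided ideal generated by all commutators $[x,y]$, $x,y\in R$) is nil, i.e. each of its elements is nilpotent.
   Context: Rings are associative, not necessarily unital. For $x,y\in R$, $[x,y]=xy-yx$. For subsets $X,Y\subseteq R$, $[X,Y]$ denotes the additive subgroup generated by all $[x,y]$ with $x\in X$, $y\in Y$; $XY$ denotes the additive subgroup generated by all products $xy$; and $X^2=XX$. *)

theory Defs
  imports Main
begin

text \<open>Rings are associative, not necessarily unital: we use the type class ring
(no multiplicative unit).\<close>

definition add_subgroup :: "'a::ab_group_add set \<Rightarrow> bool" where
  "add_subgroup H \<longleftrightarrow> 0 \<in> H \<and> (\<forall>x\<in>H. \<forall>y\<in>H. x - y \<in> H)"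

definition add_span :: "'a::ab_group_add set \<Rightarrow> 'a set" where
  "add_span S = \<Inter>{H. add_subgroup H \<and> S \<subseteq> H}"

definition commutator :: "'a::ring \<Rightarrow> 'a \<Rightarrow> 'a" where
  "commutator x y = x * y - y * x"

definition comm_set :: "'a::ring set \<Rightarrow> 'a set \<Rightarrow> 'a set" where
  "comm_set X Y = add_span {commutator x y | x y. x \<in> X \<and> y \<in> Y}"

definition prod_set :: "'a::ring set \<Rightarrow> 'a set \<Rightarrow> 'a set" where
  "prod_set X Y = add_span {x * y | x y. x \<in> X \<and> y \<in> Y}"

definition ideal_gen :: "'a::ring set \<Rightarrow> 'a set" where
  "ideal_gen S = \<Inter>{I. add_subgroup I \<and> S \<subseteq> I \<and>
      (\<forall>r x. x \<in> I \<longrightarrow> r * x \<in> I \<and> x * r \<in> I)}"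

text \<open>Positive powers in a non-unital ring: pow1 x n = x^(n+1).\<close>
fun pow1 :: "'a::times \<Rightarrow> nat \<Rightarrow> 'a" where
  "pow1 x 0 = x"
| "pow1 x (Suc n) = x * pow1 x n"

definition nilpotent_elem :: "'a::ring \<Rightarrow> bool" where
  "nilpotent_elem x \<longleftrightarrow> (\<exists>n. pow1 x n = 0)"

end

theory Submission
  imports Defs "HOL-Library.Set_Algebras"
begin

(* If a commutes with all commutators, a Herstein-type identity gives [a,x][a,y] = 0 and
   [a,x] w [a,y] = 0, so the ideal generated by [a,R] squares to zero; by hypothesis every
   product cd of two commutators is such an a. Adding to a nil ideal J ideals whose squares
   lie in J yields again a nil ideal, and this builds a tower of nil ideals: K1 contains all
   [cd,r]; then c^3 lies in K1 for every commutator c, so K2 can be taken to contain all c^2;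
   then (cd)(ce) lies in K2, so K3 can contain all products cd. Finally the square of the
   commutator ideal lies in K3, hence the commutator ideal is nil. *)

lemma add_subgroup_zero: "add_subgroup H \<Longrightarrow> 0 \<in> H"
  by (simp add: add_subgroup_def)

lemma add_subgroup_diff: "add_subgroup H \<Longrightarrow> x \<in> H \<Longrightarrow> y \<in> H \<Longrightarrow> x - y \<in> H"
  by (simp add: add_subgroup_def)

lemma add_subgroup_add: "add_subgroup H \<Longrightarrow> x \<in> H \<Longrightarrow> y \<in> H \<Longrightarrow> x + y \<in> H"
  using add_subgroup_diff[of H x "0 - y"] add_subgroup_diff[of H 0 y] add_subgroup_zero[of H]
  by simp

lemma add_span_superset: "S \<subseteq> add_span S"
  by (auto simp: add_span_def)

lemma add_subgroup_add_span: "add_subgroup (add_span S)"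
  by (auto simp: add_subgroup_def add_span_def)

lemma add_span_least: "add_subgroup H \<Longrightarrow> S \<subseteq> H \<Longrightarrow> add_span S \<subseteq> H"
  by (auto simp: add_span_def)

definition is_ideal :: "'a::ring set \<Rightarrow> bool" where
  "is_ideal I \<longleftrightarrow> add_subgroup I \<and> (\<forall>r x. x \<in> I \<longrightarrow> r * x \<in> I \<and> x * r \<in> I)"

lemma
  assumes "is_ideal I"
  shows is_ideal_zero: "0 \<in> I"
    and is_ideal_diff: "x \<in> I \<Longrightarrow> y \<in> I \<Longrightarrow> x - y \<in> I"
    and is_ideal_add: "x \<in> I \<Longrightarrow> y \<in> I \<Longrightarrow> x + y \<in> I"
    and is_ideal_mult_left: "x \<in> I \<Longrightarrow> r * x \<in> I"
    and is_ideal_mult_right: "x \<in> I \<Longrightarrow> x * r \<in> I"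
  using assms add_subgroup_zero add_subgroup_diff add_subgroup_add
  by (auto simp: is_ideal_def)

lemma is_ideal_zero_set: "is_ideal {0}"
  by (simp add: is_ideal_def add_subgroup_def)

lemma is_ideal_ideal_gen: "is_ideal (ideal_gen S)"
  by (auto simp: is_ideal_def add_subgroup_def ideal_gen_def)

lemma ideal_gen_superset: "S \<subseteq> ideal_gen S"
  by (auto simp: ideal_gen_def)

lemma ideal_gen_least: "is_ideal I \<Longrightarrow> S \<subseteq> I \<Longrightarrow> ideal_gen S \<subseteq> I"
  by (auto simp: ideal_gen_def is_ideal_def)

lemma is_ideal_add_span:
  assumes "\<And>r x. x \<in> S \<Longrightarrow> r * x \<in> S \<and> x * r \<in> S"
  shows "is_ideal (add_span S)"
proof -
  let ?H = "{z \<in> add_span S. \<forall>r. r * z \<in> add_span S \<and> z * r \<in> add_span S}"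
  have "add_subgroup ?H"
    using add_subgroup_zero[OF add_subgroup_add_span] add_subgroup_diff[OF add_subgroup_add_span]
    by (auto simp: add_subgroup_def right_diff_distrib left_diff_distrib)
  moreover have "S \<subseteq> ?H"
    using assms add_span_superset by blast
  ultimately have "add_span S \<subseteq> ?H"
    by (rule add_span_least)
  then show ?thesis
    using add_subgroup_add_span by (auto simp: is_ideal_def)
qed

lemma set_plus_superset_left: "0 \<in> B \<Longrightarrow> A \<subseteq> A + (B::'a::monoid_add set)"
  by (metis add.right_neutral set_plus_intro subsetI)

lemma set_plus_superset_right: "0 \<in> A \<Longrightarrow> B \<subseteq> A + (B::'a::monoid_add set)"
  by (metis add.left_neutral set_plus_intro subsetI)

lemma is_ideal_set_plus:
  assumes I: "is_ideal I" and N: "is_ideal N"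
  shows "is_ideal (I + N)"
  unfolding is_ideal_def add_subgroup_def
proof (intro conjI allI impI ballI)
  show "0 \<in> I + N"
    using set_plus_intro[OF is_ideal_zero[OF I] is_ideal_zero[OF N]] by simp
next
  fix x y assume "x \<in> I + N" "y \<in> I + N"
  then obtain a b a' b' where "x = a + b" "y = a' + b'" "a \<in> I" "b \<in> N" "a' \<in> I" "b' \<in> N"
    by (auto elim!: set_plus_elim)
  then have "x - y = (a - a') + (b - b')"
    by (simp add: algebra_simps)
  then show "x - y \<in> I + N"
    using \<open>a \<in> I\<close> \<open>b \<in> N\<close> \<open>a' \<in> I\<close> \<open>b' \<in> N\<close>
    by (simp add: set_plus_intro is_ideal_diff[OF I] is_ideal_diff[OF N])
next
  fix r x assume "x \<in> I + N"
  then obtain a b where "x = a + b" "a \<in> I" "b \<in> N"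
    by (auto elim!: set_plus_elim)
  then show "r * x \<in> I + N" "x * r \<in> I + N"
    using I N by (auto simp: distrib_left distrib_right intro: is_ideal_mult_left is_ideal_mult_right)
qed

lemma ideal_gen_mult_left_mem:
  assumes J: "is_ideal J" and "S * S \<subseteq> J" "S * UNIV * S \<subseteq> J"
    and "s \<in> S" "y \<in> ideal_gen S"
  shows "s * y \<in> J"
proof -
  let ?Y = "{y. s * y \<in> J \<and> (\<forall>w. s * w * y \<in> J)}"
  have "is_ideal ?Y"
    unfolding is_ideal_def add_subgroup_def
  proof (intro conjI allI impI ballI)
    show "0 \<in> ?Y"
      using is_ideal_zero[OF J] by simp
  next
    fix a b assume "a \<in> ?Y" "b \<in> ?Y"
    then show "a - b \<in> ?Y"
      using is_ideal_diff[OF J] by (simp add: right_diff_distrib)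
  next
    fix r a assume "a \<in> ?Y"
    moreover have "s * (r * a) = s * r * a" "s * w * (r * a) = s * (w * r) * a" for w
      by (simp_all add: mult.assoc)
    ultimately show "r * a \<in> ?Y"
      by simp
    show "a * r \<in> ?Y"
      using \<open>a \<in> ?Y\<close> is_ideal_mult_right[OF J] by (simp flip: mult.assoc)
  qed
  moreover have "S \<subseteq> ?Y"
  proof
    fix t assume "t \<in> S"
    with \<open>s \<in> S\<close> have "s * t \<in> S * S" "s * w * t \<in> S * UNIV * S" for w
      by (simp_all add: set_times_intro)
    with assms(2,3) show "t \<in> ?Y"
      by blast
  qed
  ultimately show ?thesis
    using ideal_gen_least assms(5) by blast
qed

(* R need not be unital, so S * S is not covered by S * UNIV * S. *)
lemma ideal_gen_square_subset:
  assumes J: "is_ideal J" and "S * S \<subseteq> J" "S * UNIV * S \<subseteq> J"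
  shows "ideal_gen S * ideal_gen S \<subseteq> J"
proof -
  let ?X = "{x. \<forall>y \<in> ideal_gen S. x * y \<in> J}"
  have "is_ideal ?X"
    unfolding is_ideal_def add_subgroup_def
  proof (intro conjI allI impI ballI)
    show "0 \<in> ?X"
      using is_ideal_zero[OF J] by simp
  next
    fix a b assume "a \<in> ?X" "b \<in> ?X"
    then show "a - b \<in> ?X"
      using is_ideal_diff[OF J] by (simp add: left_diff_distrib)
  next
    fix r a assume "a \<in> ?X"
    then show "r * a \<in> ?X"
      using is_ideal_mult_left[OF J] by (simp add: mult.assoc)
    show "a * r \<in> ?X"
      using \<open>a \<in> ?X\<close> is_ideal_mult_left[OF is_ideal_ideal_gen, of _ S r]
      by (simp add: mult.assoc)
  qed
  moreover have "S \<subseteq> ?X"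
    using ideal_gen_mult_left_mem[OF assms] by blast
  ultimately have "ideal_gen S \<subseteq> ?X"
    by (rule ideal_gen_least)
  then show ?thesis
    by (auto elim!: set_times_elim)
qed

lemma pow1_add: "pow1 (x::'a::semigroup_mult) (Suc (m + n)) = pow1 x m * pow1 x n"
  by (induction m) (simp_all add: mult.assoc)

lemma pow1_pow1: "pow1 (pow1 (x::'a::semigroup_mult) n) m = pow1 x (m * Suc n + n)"
proof (induction m)
  case (Suc m)
  then show ?case
    using pow1_add[of x n "m * Suc n + n"] by (simp add: add.commute add.left_commute)
qed simp

lemma pow1_plus_minus_pow1_mem:
  assumes N: "is_ideal N" and "b \<in> N"
  shows "pow1 (a + b) k - pow1 a k \<in> N"
proof (induction k)
  case 0
  then show ?case using assms by simp
next
  case (Suc k)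
  have "pow1 (a + b) (Suc k) - pow1 a (Suc k)
      = a * (pow1 (a + b) k - pow1 a k) + b * pow1 (a + b) k"
    by (simp add: algebra_simps)
  also have "\<dots> \<in> N"
    using Suc assms is_ideal_add[OF N] is_ideal_mult_left[OF N] is_ideal_mult_right[OF N] by simp
  finally show ?case .
qed

(* For an ideal J: the image of I in R/J is nil. *)
definition nil_modulo :: "'a::ring set \<Rightarrow> 'a set \<Rightarrow> bool" where
  "nil_modulo J I \<longleftrightarrow> (\<forall>z \<in> I. \<exists>n. pow1 z n \<in> J)"

lemma nil_modulo_zero_iff: "nil_modulo {0} I \<longleftrightarrow> (\<forall>z \<in> I. nilpotent_elem z)"
  by (simp add: nil_modulo_def nilpotent_elem_def)

lemma nil_modulo_refl: "nil_modulo J J"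
  unfolding nil_modulo_def by (metis pow1.simps(1))

lemma nil_modulo_mono: "J \<subseteq> J' \<Longrightarrow> nil_modulo J I \<Longrightarrow> nil_modulo J' I"
  unfolding nil_modulo_def by blast

lemma nil_modulo_trans: "nil_modulo J I \<Longrightarrow> nil_modulo I K \<Longrightarrow> nil_modulo J K"
  unfolding nil_modulo_def by (metis pow1_pow1)

lemma nil_modulo_if_square_subset: "I * I \<subseteq> J \<Longrightarrow> nil_modulo J I"
  unfolding nil_modulo_def by (metis pow1.simps set_times_intro subsetD)

lemma nil_modulo_set_plus:
  assumes N: "is_ideal N" and "nil_modulo N I"
  shows "nil_modulo N (I + N)"
  unfolding nil_modulo_def
proof
  fix z assume "z \<in> I + N"
  then obtain a b where "z = a + b" "a \<in> I" "b \<in> N"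
    by (auto elim!: set_plus_elim)
  then obtain n where "pow1 a n \<in> N"
    using assms(2) by (auto simp: nil_modulo_def)
  then have "pow1 z n - pow1 a n + pow1 a n \<in> N"
    using pow1_plus_minus_pow1_mem[OF N \<open>b \<in> N\<close>] \<open>z = a + b\<close> is_ideal_add[OF N] by blast
  then show "\<exists>n. pow1 z n \<in> N"
    by auto
qed

lemma set_plus_square_subset:
  assumes J: "is_ideal J" and "N * N \<subseteq> J"
  shows "(J + N) * (J + N) \<subseteq> J"
proof
  fix z assume "z \<in> (J + N) * (J + N)"
  then obtain j n j' n' where "z = (j + n) * (j' + n')" "j \<in> J" "n \<in> N" "j' \<in> J" "n' \<in> N"
    by (auto elim!: set_times_elim set_plus_elim)
  moreover have "(j + n) * (j' + n') = j * (j' + n') + n * j' + n * n'"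
    by (simp add: algebra_simps)
  moreover have "n * n' \<in> J"
    using assms(2) \<open>n \<in> N\<close> \<open>n' \<in> N\<close> by (auto intro: set_times_intro)
  ultimately show "z \<in> J"
    using is_ideal_add[OF J] is_ideal_mult_left[OF J] is_ideal_mult_right[OF J] by simp
qed

lemma nil_modulo_add_span:
  assumes J: "is_ideal J" and NS: "\<And>N. N \<in> NS \<Longrightarrow> is_ideal N \<and> N * N \<subseteq> J"
  shows "nil_modulo J (add_span (J \<union> \<Union>NS))"
proof -
  \<comment> \<open>Closed under subtraction because the sum of two such ideals is again one.\<close>
  define Q where "Q = {z. \<exists>I. is_ideal I \<and> J \<subseteq> I \<and> nil_modulo J I \<and> z \<in> I}"
  have "add_subgroup Q"
    unfolding add_subgroup_def
  proof (intro conjI ballI)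
    show "0 \<in> Q"
      unfolding Q_def using J is_ideal_zero[OF J] nil_modulo_refl by blast
  next
    fix x y assume "x \<in> Q" "y \<in> Q"
    then obtain I I' where I: "is_ideal I" "J \<subseteq> I" "nil_modulo J I" "x \<in> I"
      and I': "is_ideal I'" "J \<subseteq> I'" "nil_modulo J I'" "y \<in> I'"
      unfolding Q_def by blast
    have "x - y \<in> I + I'"
      using set_plus_intro[OF \<open>x \<in> I\<close> is_ideal_diff[OF I'(1) is_ideal_zero[OF I'(1)] \<open>y \<in> I'\<close>]]
      by simp
    moreover have "J \<subseteq> I + I'"
      using I(2) set_plus_superset_left[OF is_ideal_zero[OF I'(1)]] by blast
    moreover have "nil_modulo J (I + I')"
      using nil_modulo_trans[OF I'(3) nil_modulo_set_plus[OF I'(1) nil_modulo_mono[OF I'(2) I(3)]]] .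
    ultimately show "x - y \<in> Q"
      unfolding Q_def using is_ideal_set_plus[OF I(1) I'(1)] by blast
  qed
  moreover have "J \<union> \<Union>NS \<subseteq> Q"
  proof -
    have "J \<subseteq> Q"
      unfolding Q_def using J nil_modulo_refl by blast
    moreover have "N \<subseteq> Q" if "N \<in> NS" for N
    proof -
      have "N \<subseteq> J + N" "J \<subseteq> J + N"
        using set_plus_superset_right[OF is_ideal_zero[OF J]]
          set_plus_superset_left[OF is_ideal_zero] NS[OF that] by blast+
      moreover have "nil_modulo J (J + N)"
        using nil_modulo_if_square_subset set_plus_square_subset J NS[OF that] by blast
      ultimately show ?thesis
        unfolding Q_def using is_ideal_set_plus[OF J] NS[OF that] by blast
    qed
    ultimately show ?thesis
      by blast
  qed
  ultimately have "add_span (J \<union> \<Union>NS) \<subseteq> Q"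
    by (rule add_span_least)
  then show ?thesis
    unfolding Q_def nil_modulo_def by blast
qed

lemma nil_ideal_extension:
  assumes J: "is_ideal J" "nil_modulo {0} J"
    and G: "\<And>T. T \<in> G \<Longrightarrow> T * T \<subseteq> J \<and> T * UNIV * T \<subseteq> J"
  obtains K where "is_ideal K" "nil_modulo {0} K" "J \<subseteq> K" "\<Union>G \<subseteq> K"
proof
  let ?S = "J \<union> \<Union>(ideal_gen ` G)"
  have ideals: "\<And>N. N \<in> ideal_gen ` G \<Longrightarrow> is_ideal N \<and> N * N \<subseteq> J"
    using G ideal_gen_square_subset[OF J(1)] is_ideal_ideal_gen by blast
  have "r * x \<in> ?S \<and> x * r \<in> ?S" if "x \<in> ?S" for r x
    using that J(1) is_ideal_ideal_gen by (auto intro: is_ideal_mult_left is_ideal_mult_right)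
  then show "is_ideal (add_span ?S)"
    by (rule is_ideal_add_span)
  show "nil_modulo {0} (add_span ?S)"
    using nil_modulo_trans[OF J(2) nil_modulo_add_span[OF J(1) ideals]] .
  show "J \<subseteq> add_span ?S" "\<Union>G \<subseteq> add_span ?S"
    using add_span_superset[of ?S] ideal_gen_superset by blast+
qed

definition commutators :: "'a::ring set" where
  "commutators = {commutator x y | x y. True}"

lemma commutator_in_commutators [simp]: "commutator x y \<in> commutators"
  by (auto simp: commutators_def)

definition centralizes_commutators :: "'a::ring \<Rightarrow> bool" where
  "centralizes_commutators a \<longleftrightarrow> (\<forall>x y. commutator (commutator x y) a = 0)"

lemma
  assumes "centralizes_commutators a"
  shows commutator_mult_commutator_eq_zero: "commutator a x * commutator a y = 0"
    and commutator_mult_mult_commutator_eq_zero: "commutator a x * w * commutator a y = 0"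
proof -
  have "commutator (commutator y (a * x)) a = a * commutator (commutator y x) a
      - commutator y a * commutator a x + commutator (commutator y a) a * x" for x y
    by (simp add: commutator_def algebra_simps)
  then have "commutator y a * commutator a x = 0" for x y
    using assms by (simp add: centralizes_commutators_def)
  moreover have "commutator a y * commutator a x = - (commutator y a * commutator a x)" for x y
    by (simp add: commutator_def algebra_simps)
  ultimately have vanish: "commutator a y * commutator a x = 0" for x y
    by simp
  then show "commutator a x * commutator a y = 0" .
  have "commutator a x * commutator a (w * y)
      = commutator a x * commutator a w * y + commutator a x * w * commutator a y"
    by (simp add: commutator_def algebra_simps)
  then show "commutator a x * w * commutator a y = 0"
    using vanish by simp
qed

lemma nil_ideal_commutators_of_centralizing:
  obtains K :: "'a::ring set"
  where "is_ideal K" "nil_modulo {0} K"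
    "{commutator a r | a r. centralizes_commutators a} \<subseteq> K"
proof -
  let ?G = "{range (commutator a) | a :: 'a. centralizes_commutators a}"
  have G: "T * T \<subseteq> {0} \<and> T * UNIV * T \<subseteq> {0}" if T: "T \<in> ?G" for T
  proof -
    obtain a where a: "centralizes_commutators a" "T = range (commutator a)"
      using T by blast
    show ?thesis
      unfolding a(2) set_times_def
      using commutator_mult_commutator_eq_zero[OF a(1)]
        commutator_mult_mult_commutator_eq_zero[OF a(1)]
      by auto
  qed
  obtain K where K: "is_ideal K" "nil_modulo {0} K" "{0} \<subseteq> K" "\<Union>?G \<subseteq> K"
    by (rule nil_ideal_extension[OF is_ideal_zero_set nil_modulo_refl G])
  from K(4) have "{commutator a r | a r. centralizes_commutators a} \<subseteq> K"
    by blast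
  then show ?thesis
    by (rule that[OF K(1,2)])
qed

lemma commutator_cube_mem:
  assumes J: "is_ideal J"
    and comm: "\<And>c d r. c \<in> commutators \<Longrightarrow> d \<in> commutators \<Longrightarrow> commutator (c * d) r \<in> J"
    and "c \<in> commutators"
  shows "c * c * c \<in> J"
proof -
  obtain x y where c: "c = commutator x y"
    using assms(3) by (auto simp: commutators_def)
  \<comment> \<open>c * c * x = c * commutator x (y * x) is again a product of two commutators.\<close>
  have "c * c * c = commutator (c * commutator x (y * x)) y - commutator (c * c) y * x"
    unfolding c by (simp add: commutator_def algebra_simps)
  also have "\<dots> \<in> J"
    using c comm is_ideal_diff[OF J] is_ideal_mult_right[OF J] by simp
  finally show ?thesis .
qed

lemma nil_ideal_squares_of_commutators:
  fixes J :: "'a::ring set"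
  assumes J: "is_ideal J" "nil_modulo {0} J"
    and comm: "\<And>c d r. c \<in> commutators \<Longrightarrow> d \<in> commutators \<Longrightarrow> commutator (c * d) r \<in> J"
  obtains K where "is_ideal K" "nil_modulo {0} K" "J \<subseteq> K" "{c * c | c. c \<in> commutators} \<subseteq> K"
proof -
  let ?G = "{{c * c} | c :: 'a. c \<in> commutators}"
  have G: "T * T \<subseteq> J \<and> T * UNIV * T \<subseteq> J" if T: "T \<in> ?G" for T
  proof -
    obtain c where c: "c \<in> commutators" "T = {c * c}"
      using T by blast
    have "c * c * (c * c) = c * c * c * c"
      "c * c * w * (c * c) = commutator (c * c) w * (c * c) + w * (c * c * c) * c" for w
      by (simp_all add: commutator_def algebra_simps)
    then have "c * c * (c * c) \<in> J" "c * c * w * (c * c) \<in> J" for w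
      using commutator_cube_mem[OF J(1) comm c(1)] comm[OF c(1) c(1)]
        is_ideal_add[OF J(1)] is_ideal_mult_left[OF J(1)] is_ideal_mult_right[OF J(1)]
      by simp_all
    then show ?thesis
      using c(2) by (auto elim!: set_times_elim)
  qed
  obtain K where K: "is_ideal K" "nil_modulo {0} K" "J \<subseteq> K" "\<Union>?G \<subseteq> K"
    by (rule nil_ideal_extension[OF J G])
  from K(4) have "{c * c | c. c \<in> commutators} \<subseteq> K"
    by blast
  then show ?thesis
    by (rule that[OF K(1-3)])
qed

lemma nil_ideal_products_of_commutators:
  fixes J :: "'a::ring set"
  assumes J: "is_ideal J" "nil_modulo {0} J"
    and comm: "\<And>c d r. c \<in> commutators \<Longrightarrow> d \<in> commutators \<Longrightarrow> commutator (c * d) r \<in> J"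
    and squares: "{c * c | c. c \<in> commutators} \<subseteq> J"
  obtains K :: "'a set" where "is_ideal K" "nil_modulo {0} K" "commutators * commutators \<subseteq> K"
proof -
  let ?G = "{c *o commutators | c :: 'a. c \<in> commutators}"
  have G: "T * T \<subseteq> J \<and> T * UNIV * T \<subseteq> J" if T: "T \<in> ?G" for T
  proof -
    obtain c where c: "c \<in> commutators" "T = c *o commutators"
      using T by blast
    have "c * c \<in> J"
      using c(1) squares by blast
    have prod: "c * d * (c * e) \<in> J" if "d \<in> commutators" for d e
    proof -
      have "c * d * (c * e) = commutator (c * d) c * e + c * c * d * e"
        by (simp add: commutator_def algebra_simps)
      then show ?thesis
        using comm[OF c(1) that] \<open>c * c \<in> J\<close> is_ideal_add[OF J(1)] is_ideal_mult_right[OF J(1)]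
        by simp
    qed
    moreover have "c * d * w * (c * e) \<in> J" if "d \<in> commutators" for d e w
    proof -
      have "c * d * w * (c * e) = commutator (c * d) w * (c * e) + w * (c * d * (c * e))"
        by (simp add: commutator_def algebra_simps)
      then show ?thesis
        using comm[OF c(1) that] prod[OF that] is_ideal_add[OF J(1)] is_ideal_mult_left[OF J(1)]
          is_ideal_mult_right[OF J(1)] by simp
    qed
    ultimately show ?thesis
      using c(2) by (auto simp: elt_set_times_def elim!: set_times_elim)
  qed
  obtain K where K: "is_ideal K" "nil_modulo {0} K" "J \<subseteq> K" "\<Union>?G \<subseteq> K"
    by (rule nil_ideal_extension[OF J G])
  from K(4) have "commutators * commutators \<subseteq> K"
    by (auto simp: elt_set_times_def elim!: set_times_elim)
  then show ?thesis
    by (rule that[OF K(1,2)])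
qed

lemma nil_commutator_ideal:
  fixes J :: "'a::ring set"
  assumes J: "is_ideal J" "nil_modulo {0} J"
    and products: "commutators * commutators \<subseteq> J"
  shows "nil_modulo {0} (ideal_gen (commutators :: 'a set))"
proof -
  have "s * w * t \<in> J" if "s \<in> commutators" "t \<in> commutators" for s t w :: 'a
  proof -
    have "s * w * t = s * t * w + s * commutator w t"
      by (simp add: commutator_def algebra_simps)
    moreover have "s * t \<in> J" "s * commutator w t \<in> J"
      using that subsetD[OF products] by (simp_all add: set_times_intro)
    ultimately show ?thesis
      using is_ideal_add[OF J(1)] is_ideal_mult_right[OF J(1)] by simp
  qed
  then have "commutators * UNIV * commutators \<subseteq> J"
    by (auto elim!: set_times_elim)
  with products have "ideal_gen commutators * ideal_gen commutators \<subseteq> J"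
    by (rule ideal_gen_square_subset[OF J(1)])
  then show ?thesis
    by (rule nil_modulo_trans[OF J(2) nil_modulo_if_square_subset])
qed

lemma commutator_mem_comm_set: "x \<in> X \<Longrightarrow> y \<in> Y \<Longrightarrow> commutator x y \<in> comm_set X Y"
  unfolding comm_set_def by (rule subsetD[OF add_span_superset]) blast

lemma mult_mem_prod_set: "x \<in> X \<Longrightarrow> y \<in> Y \<Longrightarrow> x * y \<in> prod_set X Y"
  unfolding prod_set_def by (rule subsetD[OF add_span_superset]) blast

lemma centralizes_commutators_mult:
  fixes c d :: "'a::ring"
  assumes "comm_set (comm_set UNIV UNIV) (prod_set (comm_set UNIV UNIV) (comm_set UNIV UNIV))
      = {0::'a}"
    and "c \<in> commutators" "d \<in> commutators"
  shows "centralizes_commutators (c * d)"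
proof -
  let ?C = "comm_set (UNIV::'a set) UNIV"
  have "commutators \<subseteq> ?C"
    unfolding commutators_def using commutator_mem_comm_set by blast
  then have "c * d \<in> prod_set ?C ?C"
    using assms(2,3) mult_mem_prod_set by blast
  then have "commutator (commutator x y) (c * d) \<in> comm_set ?C (prod_set ?C ?C)" for x y
    using commutator_mem_comm_set[OF commutator_mem_comm_set] by blast
  then show ?thesis
    using assms(1) by (simp add: centralizes_commutators_def)
qed

theorem corollary2p4:
  fixes R :: "'a::ring itself"
  assumes "comm_set (comm_set (UNIV::'a set) UNIV)
             (prod_set (comm_set (UNIV::'a set) UNIV) (comm_set UNIV UNIV)) = {0}"
  shows "\<forall>z \<in> ideal_gen {commutator x y | x y :: 'a. True}. nilpotent_elem z"
proof -
  obtain K1 :: "'a set" where K1: "is_ideal K1" "nil_modulo {0} K1"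
    "{commutator a r | a r. centralizes_commutators a} \<subseteq> K1"
    by (rule nil_ideal_commutators_of_centralizing)
  have comm1: "commutator (c * d) r \<in> K1" if "c \<in> commutators" "d \<in> commutators" for c d r
    using K1(3) centralizes_commutators_mult[OF assms that] by blast
  obtain K2 where K2: "is_ideal K2" "nil_modulo {0} K2" "K1 \<subseteq> K2"
    "{c * c | c. c \<in> commutators} \<subseteq> K2"
    by (rule nil_ideal_squares_of_commutators[OF K1(1,2) comm1])
  have comm2: "commutator (c * d) r \<in> K2" if "c \<in> commutators" "d \<in> commutators" for c d r
    using comm1[OF that] K2(3) by blast
  obtain K3 :: "'a set" where "is_ideal K3" "nil_modulo {0} K3" "commutators * commutators \<subseteq> K3"
    by (rule nil_ideal_products_of_commutators[OF K2(1,2) comm2 K2(4)])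
  then have "nil_modulo {0} (ideal_gen (commutators :: 'a set))"
    by (rule nil_commutator_ideal)
  then show ?thesis
    by (simp add: nil_modulo_zero_iff commutators_def)
qed

end
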